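(* Let $R\subseteq[n-1]$. An $R$-permutation $\pi$ is $R$-312-avoiding if and only if for every $h\in[r]$ one has $$\big(\min\{\pi_{q_h+1},\dots,\pi_{q_{h+1}}\},\ \max\{\pi_1,\dots,\pi_{q_h}\}\big)\subseteq\{\pi_1,\dots,\pi_{q_{h+1}}\},$$ where $(x,y)$ denotes the set of integers strictly between $x$ and $y$.
   Context: Fix $n\ge1$, $[m]=\{1,\dots,m\}$. Fix $R\subseteq[n-1]$ with elements $q_1<\dots<q_r$ ($r=|R|\ge 0$), $q_0:=0$, $q_{r+1}:=n$. The $h$-th carrel ($h\in[r+1]$) is the index set $\{q_{h-1}+1,\dots,q_h\}$. An $R$-permutation is a permutation $\pi=(\pi_1,\dots,\pi_n)$ of $[n]$ in one-line notation that is strictly increasing on each carrel. An $R$-permutation $\pi$ is $R$-312-containing if there exist $h\in[r-1]$ and indices $1\le a\le q_h<b\le q_{h+1}<c\le n$ with $\pi_b<\pi_c<\pi_a$; otherwise it is $R$-312-avoiding. *)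

theory Defs
  imports Main
begin

text \<open>One-line notation: a permutation of [n] is a list p with distinct entries and
  set p = {1..n}; its 1-indexed entry pi_i is ent p i = p ! (i - 1).\<close>

definition ent :: "nat list \<Rightarrow> nat \<Rightarrow> nat" where
  "ent p i = p ! (i - 1)"

definition qpt :: "nat \<Rightarrow> nat set \<Rightarrow> nat \<Rightarrow> nat" where
  "qpt n R h = (if h = 0 then 0
                else if h \<le> card R then sorted_list_of_set R ! (h - 1)
                else n)"

definition is_R_perm :: "nat \<Rightarrow> nat set \<Rightarrow> nat list \<Rightarrow> bool" where
  "is_R_perm n R p \<longleftrightarrow>
     length p = n \<and> distinct p \<and> set p = {1..n} \<and>
     (\<forall>h\<in>{1..card R + 1}. \<forall>i j.
        qpt n R (h - 1) + 1 \<le> i \<and> i < j \<and> j \<le> qpt n R h \<longrightarrow> ent p i < ent p j)"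

definition R_312_containing :: "nat \<Rightarrow> nat set \<Rightarrow> nat list \<Rightarrow> bool" where
  "R_312_containing n R p \<longleftrightarrow>
     (\<exists>h\<in>{1..card R - 1}. \<exists>a b c.
        1 \<le> a \<and> a \<le> qpt n R h \<and> qpt n R h < b \<and> b \<le> qpt n R (h + 1) \<and>
        qpt n R (h + 1) < c \<and> c \<le> n \<and>
        ent p b < ent p c \<and> ent p c < ent p a)"

definition R_312_avoiding :: "nat \<Rightarrow> nat set \<Rightarrow> nat list \<Rightarrow> bool" where
  "R_312_avoiding n R p \<longleftrightarrow> \<not> R_312_containing n R p"

end

theory Submission
  imports Defs
begin

text \<open>An \<open>R\<close>-312 pattern across the breakpoints \<open>q\<^sub>h < q\<^sub>h\<^sub>+\<^sub>1\<close> may as well use the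
  largest entry among the first \<open>q\<^sub>h\<close> positions as its "3" and the smallest entry of the
  \<open>(h+1)\<close>-st carrel as its "1". So a pattern exists exactly when some value strictly between
  these two occurs after position \<open>q\<^sub>h\<^sub>+\<^sub>1\<close>, i.e. is missing from \<open>\<pi>\<^sub>1, \<dots>, \<pi>\<^sub>q\<^sub>h\<^sub>+\<^sub>1\<close>.\<close>

lemma image_ent_atLeastAtMost_length: "ent p ` {1..length p} = set p"
proof -
  have "ent p ` {1..length p} = (!) p ` {..<length p}"
    unfolding image_Suc_lessThan[symmetric] by (simp add: ent_def image_comp comp_def)
  also have "\<dots> = set p" by (auto simp: set_conv_nth)
  finally show ?thesis .
qed

lemma inj_on_ent: "distinct p \<Longrightarrow> inj_on (ent p) {1..length p}"
  unfolding inj_on_def ent_def by (auto simp: nth_eq_iff_index_eq)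

definition has_312_across :: "nat \<Rightarrow> nat list \<Rightarrow> nat \<Rightarrow> nat \<Rightarrow> bool" where
  "has_312_across n p lo hi \<longleftrightarrow>
     (\<exists>a b c. 1 \<le> a \<and> a \<le> lo \<and> lo < b \<and> b \<le> hi \<and> hi < c \<and> c \<le> n \<and>
        ent p b < ent p c \<and> ent p c < ent p a)"

lemma has_312_across_imp_gap:
  assumes "distinct p" "length p = n" "has_312_across n p lo hi"
  shows "\<not> {Min (ent p ` {lo + 1..hi})<..<Max (ent p ` {1..lo})} \<subseteq> ent p ` {1..hi}"
proof -
  obtain a b c where abc: "1 \<le> a" "a \<le> lo" "lo < b" "b \<le> hi" "hi < c" "c \<le> n"
    and bc: "ent p b < ent p c" and ca: "ent p c < ent p a"
    using assms(3) unfolding has_312_across_def by blast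
  have "Min (ent p ` {lo + 1..hi}) \<le> ent p b" using abc by (intro Min_le) auto
  moreover have "ent p a \<le> Max (ent p ` {1..lo})" using abc by (intro Max_ge) auto
  moreover have "ent p c \<notin> ent p ` {1..hi}"
  proof
    assume "ent p c \<in> ent p ` {1..hi}"
    then obtain j where "j \<in> {1..hi}" "ent p c = ent p j" by auto
    with inj_on_ent[OF assms(1)] abc assms(2) have "c = j"
      by (auto dest: inj_onD)
    with \<open>j \<in> {1..hi}\<close> \<open>hi < c\<close> show False by simp
  qed
  moreover have "ent p c \<in> {Min (ent p ` {lo + 1..hi})<..<Max (ent p ` {1..lo})}"
    using calculation(1,2) bc ca by simp
  ultimately show ?thesis by blast
qed

lemma gap_imp_has_312_across:
  assumes "length p = n" "set p = {1..n}" "1 \<le> lo" "lo < hi" "hi \<le> n"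
    and gap: "\<not> {Min (ent p ` {lo + 1..hi})<..<Max (ent p ` {1..lo})} \<subseteq> ent p ` {1..hi}"
  shows "has_312_across n p lo hi"
proof -
  obtain v where v: "Min (ent p ` {lo + 1..hi}) < v" "v < Max (ent p ` {1..lo})"
    "v \<notin> ent p ` {1..hi}"
    using gap unfolding subset_iff greaterThanLessThan_iff by blast
  have "Max (ent p ` {1..lo}) \<in> ent p ` {1..lo}" using assms(3) by (intro Max_in) auto
  then obtain a where a: "a \<in> {1..lo}" "Max (ent p ` {1..lo}) = ent p a" by auto
  have "Min (ent p ` {lo + 1..hi}) \<in> ent p ` {lo + 1..hi}" using assms(4) by (intro Min_in) auto
  then obtain b where b: "b \<in> {lo + 1..hi}" "Min (ent p ` {lo + 1..hi}) = ent p b" by auto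
  have "ent p a \<in> set p"
    using a assms(1,4,5) image_ent_atLeastAtMost_length[of p] by auto
  then have "v \<in> set p" using v a assms(2) by auto
  then have "v \<in> ent p ` {1..n}" using image_ent_atLeastAtMost_length[of p] assms(1) by simp
  then obtain c where c: "c \<in> {1..n}" "v = ent p c" by blast
  with v(3) have "hi < c" by (auto simp: not_less[symmetric])
  then show ?thesis
    unfolding has_312_across_def using a b c v by (intro exI[of _ a] exI[of _ b] exI[of _ c]) auto
qed

lemma has_312_across_iff_gap:
  assumes "length p = n" "distinct p" "set p = {1..n}" "1 \<le> lo" "lo < hi" "hi \<le> n"
  shows "has_312_across n p lo hi \<longleftrightarrow>
    \<not> {Min (ent p ` {lo + 1..hi})<..<Max (ent p ` {1..lo})} \<subseteq> ent p ` {1..hi}"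
  using has_312_across_imp_gap gap_imp_has_312_across assms by blast

lemma qpt_in: "finite R \<Longrightarrow> h \<in> {1..card R} \<Longrightarrow> qpt n R h \<in> R"
  unfolding qpt_def
  by auto (metis Suc_le_eq Suc_pred length_sorted_list_of_set nth_mem set_sorted_list_of_set)

lemma qpt_less_qpt_Suc:
  assumes "finite R" "1 \<le> h" "h < card R"
  shows "qpt n R h < qpt n R (h + 1)"
proof -
  have "sorted_list_of_set R ! (h - 1) < sorted_list_of_set R ! h"
    using assms sorted_wrt_nth_less[OF strict_sorted_list_of_set[of R], of "h - 1" h] by auto
  then show ?thesis using assms unfolding qpt_def by auto
qed

lemma qpt_card_Suc: "qpt n R (card R + 1) = n"
  unfolding qpt_def by simp

lemma qpt_bounds:
  assumes "R \<subseteq> {1..n - 1}" "h \<in> {1..card R}"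
  shows "1 \<le> qpt n R h" "qpt n R h < qpt n R (h + 1)" "qpt n R (h + 1) \<le> n"
proof -
  have fin: "finite R" using assms(1) finite_subset by blast
  have "qpt n R h \<in> {1..n - 1}" using qpt_in[OF fin assms(2)] assms(1) by blast
  then have h: "1 \<le> qpt n R h" "qpt n R h < n" by auto
  then show "1 \<le> qpt n R h" by simp
  have "qpt n R h < qpt n R (h + 1) \<and> qpt n R (h + 1) \<le> n"
  proof (cases "h = card R")
    case True
    then show ?thesis using h qpt_card_Suc by simp
  next
    case False
    then have "qpt n R (h + 1) \<in> R" using assms(2) by (intro qpt_in[OF fin]) auto
    then have "qpt n R (h + 1) \<in> {1..n - 1}" using assms(1) by blast
    then show ?thesis using False assms(2) qpt_less_qpt_Suc[OF fin, of h] by auto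
  qed
  then show "qpt n R h < qpt n R (h + 1)" "qpt n R (h + 1) \<le> n" by auto
qed

text \<open>The definition only lets \<open>h\<close> range over \<open>[r-1]\<close>; adding \<open>h = r\<close> is harmless because
  \<open>q\<^sub>r\<^sub>+\<^sub>1 = n\<close> leaves no room for the "2" of the pattern.\<close>
lemma R_312_containing_iff:
  "R_312_containing n R p \<longleftrightarrow>
     (\<exists>h\<in>{1..card R}. has_312_across n p (qpt n R h) (qpt n R (h + 1)))"
    (is "_ \<longleftrightarrow> (\<exists>h\<in>_. ?P h)")
proof -
  have "\<not> ?P (card R)"
    unfolding has_312_across_def qpt_card_Suc by auto
  then have "h \<in> {1..card R} \<and> ?P h \<longleftrightarrow> h \<in> {1..card R - 1} \<and> ?P h" for h
    by (cases "h = card R") auto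
  then show ?thesis unfolding R_312_containing_def has_312_across_def by blast
qed

theorem fact4p4:
  fixes n :: nat and R :: "nat set" and p :: "nat list"
  assumes "n \<ge> 1" and "R \<subseteq> {1..n - 1}" and "is_R_perm n R p"
  shows "R_312_avoiding n R p \<longleftrightarrow>
    (\<forall>h\<in>{1..card R}.
       {Min (ent p ` {qpt n R h + 1..qpt n R (h + 1)})<..<Max (ent p ` {1..qpt n R h})}
         \<subseteq> ent p ` {1..qpt n R (h + 1)})"
proof -
  have perm: "length p = n" "distinct p" "set p = {1..n}"
    using assms(3) unfolding is_R_perm_def by blast+
  have "has_312_across n p (qpt n R h) (qpt n R (h + 1)) \<longleftrightarrow>
      \<not> {Min (ent p ` {qpt n R h + 1..qpt n R (h + 1)})<..<Max (ent p ` {1..qpt n R h})}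
         \<subseteq> ent p ` {1..qpt n R (h + 1)}" if "h \<in> {1..card R}" for h
    using has_312_across_iff_gap[OF perm qpt_bounds[OF assms(2) that]] .
  then show ?thesis unfolding R_312_avoiding_def R_312_containing_iff by blast
qed

end
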